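(* Fix real $R_1,R_2\ge1$. For a prime $\ell$ and real $N\ge1$, let $\mathcal{C}'_\ell(N,R_1,R_2)$ be the set of triples $(a,b,c)\in\mathcal{R}_{\mathbb{Z}^3}(N,R_1,R_2)$ that are not $\ell$-carefree. Then \[ \frac{\#\mathcal{C}'_\ell(N,R_1,R_2)}{N}=O\Big(\ell^{-4/3}+\frac1{\sqrt N}\Big), \] with implied constant depending only on $R_1,R_2$ (not on $N$ or $\ell$).
   Context: $\mathcal{R}_{\mathbb{Z}^3}(N,R_1,R_2)=\{(a,b,c)\in\mathbb{Z}_{\ge1}^3:\ ab^{2/3}c<N,\ a/c\in[1,R_1],\ b\in[1,R_2]\}$. A triple $(a,b,c)$ of positive integers is $\ell$-carefree if $\ell^2\nmid ab$, $\ell^2\nmid bc$ and $\ell^2\nmid ca$. *)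

theory Defs
  imports Complex_Main "HOL-Computational_Algebra.Primes"
begin

definition region_Z3 :: "real \<Rightarrow> real \<Rightarrow> real \<Rightarrow> (nat \<times> nat \<times> nat) set" where
  "region_Z3 N R1 R2 = {(a, b, c). a \<ge> 1 \<and> b \<ge> 1 \<and> c \<ge> 1 \<and>
      real a * real b powr (2/3) * real c < N \<and>
      1 \<le> real a / real c \<and> real a / real c \<le> R1 \<and>
      1 \<le> real b \<and> real b \<le> R2}"

definition carefree :: "nat \<Rightarrow> nat \<times> nat \<times> nat \<Rightarrow> bool" where
  "carefree l t = (case t of (a, b, c) \<Rightarrow>
      \<not> l^2 dvd a * b \<and> \<not> l^2 dvd b * c \<and> \<not> l^2 dvd c * a)"

definition not_carefree_set :: "nat \<Rightarrow> real \<Rightarrow> real \<Rightarrow> real \<Rightarrow> (nat \<times> nat \<times> nat) set" where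
  "not_carefree_set l N R1 R2 = {t \<in> region_Z3 N R1 R2. \<not> carefree l t}"

end

theory Submission
  imports Defs
begin

text \<open>Every triple of the region has c \<le> sqrt N, a \<le> sqrt (R1 N) and b \<le> R2, so the triples
  with p dividing a and q dividing c number at most sqrt R1 R2 N / (p q). Since b \<le> R2, a prime
  l > R2 does not divide b, and then a triple that is not l-carefree has l^2 dividing a, l^2
  dividing c, or l dividing both: each case saves a factor l^2, giving O(N / l^2). The finitely
  many primes l \<le> R2 are absorbed into the constant. The bound is thus O(l^(-2)) uniformly in N,
  stronger than required.\<close>

lemma region_Z3_bounds:
  assumes "(a, b, c) \<in> region_Z3 N R1 R2"
  shows "1 \<le> a" "1 \<le> b" "1 \<le> c" "real b \<le> R2" "real c \<le> sqrt N" "real a \<le> sqrt (R1 * N)"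
proof -
  have h: "a \<ge> 1" "b \<ge> 1" "c \<ge> 1" "real a * real b powr (2/3) * real c < N"
    "1 \<le> real a / real c" "real a / real c \<le> R1" "real b \<le> R2"
    using assms unfolding region_Z3_def by auto
  then show "1 \<le> a" "1 \<le> b" "1 \<le> c" "real b \<le> R2" by simp_all
  have "real b powr (2/3) \<ge> 1"
    using h by (simp add: ge_one_powr_ge_zero)
  then have "real a \<le> real a * real b powr (2/3)"
    by (simp add: mult_le_cancel_left1)
  then have "real a * real c \<le> real a * real b powr (2/3) * real c"
    by (simp add: mult_right_mono)
  with h have ac: "real a * real c < N" by linarith
  have c_le_a: "real c \<le> real a" and a_le: "real a \<le> R1 * real c"
    using h by (simp_all add: le_divide_eq divide_le_eq)
  have "(real c)\<^sup>2 \<le> real a * real c"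
    using c_le_a by (simp add: power2_eq_square mult_right_mono)
  with ac show "real c \<le> sqrt N" by (intro real_le_rsqrt) linarith
  have "(real a)\<^sup>2 \<le> R1 * real c * real a"
    using a_le by (simp add: power2_eq_square mult_right_mono)
  also have "\<dots> = R1 * (real a * real c)"
    by (simp add: mult_ac)
  also have "\<dots> \<le> R1 * N"
    using ac h(5,6) by (intro mult_left_mono) auto
  finally show "real a \<le> sqrt (R1 * N)" by (rule real_le_rsqrt)
qed

lemma finite_region_Z3: "finite (region_Z3 N R1 R2)"
proof (rule finite_subset)
  show "region_Z3 N R1 R2 \<subseteq> {..nat \<lfloor>sqrt (R1 * N)\<rfloor>} \<times> {..nat \<lfloor>R2\<rfloor>} \<times> {..nat \<lfloor>sqrt N\<rfloor>}"
    by (auto simp: le_nat_floor dest: region_Z3_bounds)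
qed simp

lemma card_multiples_le:
  fixes p n :: nat
  shows "card {x \<in> {1..n}. p dvd x} \<le> n div p"
proof -
  have "{x \<in> {1..n}. p dvd x} \<subseteq> (\<lambda>i. p * i) ` {1..n div p}"
  proof
    fix x assume "x \<in> {x \<in> {1..n}. p dvd x}"
    then obtain i where "x = p * i" "1 \<le> p * i" "p * i \<le> n"
      by auto
    then show "x \<in> (\<lambda>i. p * i) ` {1..n div p}"
      by (auto simp: less_eq_div_iff_mult_less_eq mult.commute)
  qed
  then have "card {x \<in> {1..n}. p dvd x} \<le> card ((\<lambda>i. p * i) ` {1..n div p})"
    by (intro card_mono) auto
  also have "\<dots> \<le> n div p"
    using card_image_le[of "{1..n div p}" "\<lambda>i. p * i"] by simp
  finally show ?thesis .
qed

lemma card_multiples_floor_le: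
  fixes p :: nat
  assumes "X \<ge> 0"
  shows "real (card {x \<in> {1..nat \<lfloor>X\<rfloor>}. p dvd x}) \<le> X / real p"
proof -
  have "real (card {x \<in> {1..nat \<lfloor>X\<rfloor>}. p dvd x}) \<le> real (nat \<lfloor>X\<rfloor> div p)"
    using card_multiples_le by (simp only: of_nat_le_iff)
  also have "\<dots> \<le> real (nat \<lfloor>X\<rfloor>) / real p"
    by (rule of_nat_div_le_of_nat)
  also have "\<dots> \<le> X / real p"
    using assms by (intro divide_right_mono) auto
  finally show ?thesis .
qed

definition region_Z3_dvd :: "nat \<Rightarrow> nat \<Rightarrow> real \<Rightarrow> real \<Rightarrow> real \<Rightarrow> (nat \<times> nat \<times> nat) set" where
  "region_Z3_dvd p q N R1 R2 = {(a, b, c) \<in> region_Z3 N R1 R2. p dvd a \<and> q dvd c}"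

lemma finite_region_Z3_dvd: "finite (region_Z3_dvd p q N R1 R2)"
  unfolding region_Z3_dvd_def by (rule finite_subset[OF _ finite_region_Z3]) auto

lemma card_region_Z3_dvd_le:
  assumes "N \<ge> 0" "R1 \<ge> 0" "R2 \<ge> 0"
  shows "real (card (region_Z3_dvd p q N R1 R2)) \<le> sqrt R1 * R2 * N / (real p * real q)"
proof -
  define A where "A = {x \<in> {1..nat \<lfloor>sqrt (R1 * N)\<rfloor>}. p dvd x}"
  define C where "C = {x \<in> {1..nat \<lfloor>sqrt N\<rfloor>}. q dvd x}"
  have "region_Z3_dvd p q N R1 R2 \<subseteq> A \<times> {1..nat \<lfloor>R2\<rfloor>} \<times> C"
  proof
    fix t assume "t \<in> region_Z3_dvd p q N R1 R2"
    then obtain a b c where "t = (a, b, c)" "(a, b, c) \<in> region_Z3 N R1 R2" "p dvd a" "q dvd c"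
      unfolding region_Z3_dvd_def by auto
    then show "t \<in> A \<times> {1..nat \<lfloor>R2\<rfloor>} \<times> C"
      unfolding A_def C_def using region_Z3_bounds[of a b c N R1 R2] by (auto simp: le_nat_floor)
  qed
  then have "card (region_Z3_dvd p q N R1 R2) \<le> card A * nat \<lfloor>R2\<rfloor> * card C"
    using card_mono[of "A \<times> {1..nat \<lfloor>R2\<rfloor>} \<times> C"]
    by (simp add: A_def C_def card_cartesian_product mult.assoc)
  then have "real (card (region_Z3_dvd p q N R1 R2)) \<le> real (card A) * real (nat \<lfloor>R2\<rfloor>) * real (card C)"
    by (metis of_nat_le_iff of_nat_mult)
  also have "\<dots> \<le> (sqrt (R1 * N) / real p) * R2 * (sqrt N / real q)"
  proof (intro mult_mono)
    show "real (card A) \<le> sqrt (R1 * N) / real p"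
      unfolding A_def using assms by (intro card_multiples_floor_le) simp
    show "real (card C) \<le> sqrt N / real q"
      unfolding C_def using assms by (intro card_multiples_floor_le) simp
  qed (use assms in auto)
  also have "\<dots> = sqrt R1 * R2 * N / (real p * real q)"
    using assms by (simp add: real_sqrt_mult)
  finally show ?thesis .
qed

lemma not_carefree_cases:
  assumes "prime l" "\<not> l dvd b" "\<not> carefree l (a, b, c)"
  shows "l\<^sup>2 dvd a \<or> l\<^sup>2 dvd c \<or> (l dvd a \<and> l dvd c)"
proof -
  have coprime_sq: "coprime (l\<^sup>2) x" if "\<not> l dvd x" for x
    using that assms(1) by (simp add: prime_imp_coprime)
  have b: "coprime (l\<^sup>2) b"
    using coprime_sq assms(2) .
  have "l\<^sup>2 dvd a * b \<or> l\<^sup>2 dvd b * c \<or> l\<^sup>2 dvd c * a"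
    using assms(3) unfolding carefree_def by auto
  moreover have "l\<^sup>2 dvd a" if "l\<^sup>2 dvd a * b"
    using that b by (simp add: coprime_dvd_mult_left_iff)
  moreover have "l\<^sup>2 dvd c" if "l\<^sup>2 dvd b * c"
    using that b by (simp add: coprime_dvd_mult_right_iff)
  moreover have "l\<^sup>2 dvd a \<or> l\<^sup>2 dvd c" if "l\<^sup>2 dvd c * a" "\<not> (l dvd a \<and> l dvd c)"
    using that coprime_sq[of a] coprime_sq[of c]
    by (auto simp: coprime_dvd_mult_left_iff coprime_dvd_mult_right_iff)
  ultimately show ?thesis by blast
qed

lemma not_carefree_set_subset_region_Z3_dvd:
  assumes "prime l" "R2 < real l"
  shows "not_carefree_set l N R1 R2
    \<subseteq> region_Z3_dvd (l\<^sup>2) 1 N R1 R2 \<union> region_Z3_dvd 1 (l\<^sup>2) N R1 R2 \<union> region_Z3_dvd l l N R1 R2"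
proof
  fix t assume "t \<in> not_carefree_set l N R1 R2"
  then obtain a b c where t: "t = (a, b, c)" "(a, b, c) \<in> region_Z3 N R1 R2" "\<not> carefree l (a, b, c)"
    unfolding not_carefree_set_def by (cases t) auto
  have "\<not> l dvd b"
  proof
    assume "l dvd b"
    then have "l \<le> b" using region_Z3_bounds(2)[OF t(2)] by (intro dvd_imp_le) auto
    then show False using region_Z3_bounds(4)[OF t(2)] assms(2) by simp
  qed
  then have "l\<^sup>2 dvd a \<or> l\<^sup>2 dvd c \<or> (l dvd a \<and> l dvd c)"
    using assms(1) t(3) by (intro not_carefree_cases)
  with t show "t \<in> region_Z3_dvd (l\<^sup>2) 1 N R1 R2 \<union> region_Z3_dvd 1 (l\<^sup>2) N R1 R2 \<union> region_Z3_dvd l l N R1 R2"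
    unfolding region_Z3_dvd_def by auto
qed

lemma card_not_carefree_set_le:
  assumes "prime l" "N \<ge> 0" "R1 \<ge> 0" "R2 \<ge> 1"
  shows "real (card (not_carefree_set l N R1 R2)) \<le> 3 * sqrt R1 * R2 ^ 3 * N / (real l)\<^sup>2"
proof -
  define K where "K = sqrt R1 * R2 * N"
  have K: "K \<ge> 0"
    using assms by (simp add: K_def)
  have l: "real l > 0" using prime_gt_0_nat[OF assms(1)] by simp
  have count: "real (card (region_Z3_dvd p q N R1 R2)) \<le> K / (real p * real q)" for p q
    using card_region_Z3_dvd_le[of N R1 R2 p q] assms unfolding K_def by simp
  consider "real l \<le> R2" | "R2 < real l" by linarith
  then have "real (card (not_carefree_set l N R1 R2)) \<le> 3 * R2\<^sup>2 * K / (real l)\<^sup>2"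
  proof cases
    case 1
    have "not_carefree_set l N R1 R2 \<subseteq> region_Z3_dvd 1 1 N R1 R2"
      unfolding not_carefree_set_def region_Z3_dvd_def by auto
    then have "card (not_carefree_set l N R1 R2) \<le> card (region_Z3_dvd 1 1 N R1 R2)"
      by (rule card_mono[OF finite_region_Z3_dvd])
    then have "real (card (not_carefree_set l N R1 R2)) \<le> K"
      using count[of 1 1] by simp
    also have "\<dots> \<le> 3 * R2\<^sup>2 * K / (real l)\<^sup>2"
    proof -
      have "(real l)\<^sup>2 \<le> R2\<^sup>2" using 1 l by (intro power_mono) auto
      then have "(real l)\<^sup>2 \<le> 3 * R2\<^sup>2" using zero_le_power2[of R2] by linarith
      then have "(real l)\<^sup>2 * K \<le> 3 * R2\<^sup>2 * K" using K by (intro mult_right_mono) auto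
      then show ?thesis using l by (simp add: le_divide_eq mult.commute)
    qed
    finally show ?thesis .
  next
    case 2
    have "card (not_carefree_set l N R1 R2)
        \<le> card (region_Z3_dvd (l\<^sup>2) 1 N R1 R2) + card (region_Z3_dvd 1 (l\<^sup>2) N R1 R2)
          + card (region_Z3_dvd l l N R1 R2)"
      using card_mono[OF _ not_carefree_set_subset_region_Z3_dvd[OF assms(1) 2]]
      by (meson add_mono card_Un_le finite_UnI finite_region_Z3_dvd le_trans order_refl)
    then have "real (card (not_carefree_set l N R1 R2)) \<le> 3 * K / (real l)\<^sup>2"
      using count[of "l\<^sup>2" 1] count[of 1 "l\<^sup>2"] count[of l l] by (simp add: power2_eq_square)
    also have "\<dots> \<le> 3 * R2\<^sup>2 * K / (real l)\<^sup>2"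
      using K one_le_power[OF assms(4), of 2] by (intro divide_right_mono mult_right_mono) auto
    finally show ?thesis .
  qed
  also have "3 * R2\<^sup>2 * K = 3 * sqrt R1 * R2 ^ 3 * N"
    by (simp add: K_def power2_eq_square power3_eq_cube)
  finally show ?thesis .
qed

theorem lemma4p1:
  fixes R1 R2 :: real
  assumes "R1 \<ge> 1" and "R2 \<ge> 1"
  shows "\<exists>C>0. \<forall>(l::nat) (N::real). prime l \<longrightarrow> N \<ge> 1 \<longrightarrow>
           real (card (not_carefree_set l N R1 R2)) / N
             \<le> C * (real l powr (-4/3) + 1 / sqrt N)"
proof (intro exI conjI allI impI)
  define C where "C = 3 * sqrt R1 * R2 ^ 3"
  show "C > 0" using assms by (simp add: C_def)
  fix l :: nat and N :: real
  assume "prime l" "N \<ge> 1"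
  then have l: "real l \<ge> 1" using prime_ge_1_nat[of l] by simp
  have "real (card (not_carefree_set l N R1 R2)) / N \<le> C / (real l)\<^sup>2"
    using card_not_carefree_set_le[OF \<open>prime l\<close>, of N R1 R2] \<open>N \<ge> 1\<close> assms
    by (simp add: C_def divide_le_eq field_simps)
  also have "\<dots> = C * real l powr (-2)"
    using l by (simp add: powr_minus powr_realpow divide_inverse)
  also have "\<dots> \<le> C * real l powr (-4/3)"
    using l \<open>C > 0\<close> by (intro mult_left_mono powr_mono) auto
  also have "\<dots> \<le> C * (real l powr (-4/3) + 1 / sqrt N)"
    using \<open>C > 0\<close> \<open>N \<ge> 1\<close> by (intro mult_left_mono) auto
  finally show "real (card (not_carefree_set l N R1 R2)) / N \<le> C * (real l powr (-4/3) + 1 / sqrt N)" .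
qed

end
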